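(* Consider a local sparse Pauli channel (satisfying Assumption (A)) on an $n$-qubit qLDPC code. Choose $\epsilon,\delta>0$ and any nontrivial syndrome class $C\in\mathcal C^*$. Then the sample size $N$ required to estimate $\log\nu_C$ to additive error within $\epsilon$ with confidence $1-\delta$ using the recursive estimator below is independent of $n$ and scales as $$N=\mathcal O\!\left(\frac{1}{\epsilon^2}\log\frac1\delta\right).$$
   Context: $\mathcal P_n$: $n$-qubit Paulis without phases; $[[A,B]]=\pm1$ according to commutation, $\langle A,B\rangle\in\{0,1\}$ is $0$ iff they commute. A collection $\Gamma$ of supports $\gamma\subseteq\{1,\dots,n\}$ carries local Pauli channels with distributions $P_\gamma$ supported on Paulis with support in $\gamma$; total channel $\mathcal N_\Gamma=\circ_\gamma\mathcal N_\gamma$ with distribution $P$. Assumption (A): $P_\gamma(I)>1/2$, $P_\gamma(e)>0$ for all non-identity $e$ supported in $\gamma$. Local sparse: each $|\gamma|\le r_\Gamma$ and each qubit in at most $c_\Gamma$ supports, $r_\Gamma,c_\Gamma=\mathcal O(1)$. $\mathcal E_\gamma$ is the set of non-identity Paulis supported in $\gamma$, $\mathcal E_\Gamma$ their disjoint union ($e$ labeled by $\gamma_e$). Local eigenvalues $\lambda_e=\sum_fP_{\gamma_e}(f)[[f,e]]$; for $e\in\mathcal E_\gamma$, $\log\mu_e=-\frac{2}{4^{|\gamma|}}\sum_{f\in\mathcal E_\gamma}[[f,e]]\log\lambda_f$; for a syndrome class $C$, $\log\nu_C=\sum_{e\in C}\log\mu_e$. qLDPC code: measured subgroup $\mathcal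 M=\langle M_1,\dots,M_m\rangle$ of the stabilizer group, each generator of weight $\le r_s$, each qubit in $\le c_s$ generators, $r_s,c_s=\mathcal O(1)$. Syndrome classes partition $\mathcal E_\Gamma$ by equality of syndromes $(\langle e,M_i\rangle)_i$; $\mathcal C$ is the set of classes, $\mathcal C^*$ the nontrivial ones, $J(C)$ the set of violated generator indices. One sample: prepare a codeword, apply $\mathcal N_\Gamma$, perfectly measure $M_1,\dots,M_m$; the empirical mean over $N$ i.i.d. samples of the product of outcomes of $\{M_i\}_{i\in S}$ estimates $\Lambda(\prod_{i\in S}M_i)=\sum_eP(e)[[e,\prod_{i\in S}M_i]]$. Recursive estimator: with $Y_S$ the log of that empirical estimate, $X_C=-\sum_{C'\in\mathcal C,J(C')\supsetneq J(C)}X_{C'}+2^{-(|J(C)|-1)}\sum_{S\subseteq J(C)}(-1)^{|S|-1}Y_S$ (computed recursively), and $X_C$ is the estimate of $\log\nu_C$. *)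

theory Defs
  imports "HOL-Probability.Probability"
begin

text \<open>n-qubit Paulis without phases: qubit j carries (x_j, z_j); I=(F,F), X=(T,F), Z=(F,T), Y=(T,T).
  Qubits are indexed 0..n-1; an n-qubit Pauli is the identity outside {..<n}.\<close>
type_synonym pauli = "nat \<Rightarrow> bool \<times> bool"

definition Iall :: pauli where "Iall = (\<lambda>_. (False, False))"

definition supported_on :: "pauli \<Rightarrow> nat set \<Rightarrow> bool" where
  "supported_on p A \<longleftrightarrow> (\<forall>j. j \<notin> A \<longrightarrow> p j = (False, False))"

definition paulis_on :: "nat set \<Rightarrow> pauli set" where
  "paulis_on A = {p. supported_on p A}"

definition nontriv_on :: "nat set \<Rightarrow> pauli set" where
  "nontriv_on A = paulis_on A - {Iall}"

definition weight :: "pauli \<Rightarrow> nat" where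
  "weight p = card {j. p j \<noteq> (False, False)}"

definition pprod :: "'a set \<Rightarrow> ('a \<Rightarrow> pauli) \<Rightarrow> pauli" where
  "pprod A f = (\<lambda>j. (odd (card {a\<in>A. fst (f a j)}), odd (card {a\<in>A. snd (f a j)})))"

text \<open>symplectic form <A,B> in {0,1} (0 iff commute) and [[A,B]] = +-1\<close>
definition symp :: "nat \<Rightarrow> pauli \<Rightarrow> pauli \<Rightarrow> nat" where
  "symp n a b = card {j\<in>{..<n}. (fst (a j) \<and> snd (b j)) \<noteq> (snd (a j) \<and> fst (b j))} mod 2"

definition comm :: "nat \<Rightarrow> pauli \<Rightarrow> pauli \<Rightarrow> real" where
  "comm n a b = (-1) ^ symp n a b"

text \<open>Channel data: supports indexed by g \<in> Gam with support supp g, local distributions Pg g.\<close>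

definition loclam :: "nat \<Rightarrow> (nat \<Rightarrow> nat set) \<Rightarrow> (nat \<Rightarrow> pauli pmf) \<Rightarrow> nat \<Rightarrow> pauli \<Rightarrow> real" where
  "loclam n supp Pg g f = (\<Sum>h\<in>paulis_on (supp g). pmf (Pg g) h * comm n h f)"

definition logmu :: "nat \<Rightarrow> (nat \<Rightarrow> nat set) \<Rightarrow> (nat \<Rightarrow> pauli pmf) \<Rightarrow> nat \<Rightarrow> pauli \<Rightarrow> real" where
  "logmu n supp Pg g e =
     - (2 / 4 ^ card (supp g)) * (\<Sum>f\<in>nontriv_on (supp g). comm n f e * ln (loclam n supp Pg g f))"

definition EG :: "nat set \<Rightarrow> (nat \<Rightarrow> nat set) \<Rightarrow> (nat \<times> pauli) set" where
  "EG Gam supp = Sigma Gam (\<lambda>g. nontriv_on (supp g))"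

definition Ptot :: "nat set \<Rightarrow> (nat \<Rightarrow> pauli pmf) \<Rightarrow> pauli pmf" where
  "Ptot Gam Pg = map_pmf (\<lambda>f. pprod Gam f) (Pi_pmf Gam Iall Pg)"

definition synd :: "nat \<Rightarrow> nat \<Rightarrow> (nat \<Rightarrow> pauli) \<Rightarrow> pauli \<Rightarrow> nat set" where
  "synd n m M e = {i\<in>{..<m}. symp n e (M i) = 1}"

text \<open>the set of syndromes J(C) of the classes C in \<C>; a class is identified with its syndrome\<close>
definition class_synds :: "nat \<Rightarrow> nat \<Rightarrow> (nat \<Rightarrow> pauli) \<Rightarrow> nat set \<Rightarrow> (nat \<Rightarrow> nat set) \<Rightarrow> nat set set" where
  "class_synds n m M Gam supp = (\<lambda>x. synd n m M (snd x)) ` EG Gam supp"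

definition synd_class :: "nat \<Rightarrow> nat \<Rightarrow> (nat \<Rightarrow> pauli) \<Rightarrow> nat set \<Rightarrow> (nat \<Rightarrow> nat set) \<Rightarrow> nat set \<Rightarrow> (nat \<times> pauli) set" where
  "synd_class n m M Gam supp J = {x\<in>EG Gam supp. synd n m M (snd x) = J}"

definition lognu :: "nat \<Rightarrow> nat \<Rightarrow> (nat \<Rightarrow> pauli) \<Rightarrow> nat set \<Rightarrow> (nat \<Rightarrow> nat set) \<Rightarrow> (nat \<Rightarrow> pauli pmf) \<Rightarrow> nat set \<Rightarrow> real" where
  "lognu n m M Gam supp Pg J = (\<Sum>x\<in>synd_class n m M Gam supp J. logmu n supp Pg (fst x) (snd x))"

text \<open>Y_S: log of the empirical mean, over samples omega 0..N-1 (errors), of the product of the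
  outcomes of {M_i}_{i in S}, which equals [[e, prod_{i in S} M_i]]\<close>
definition Yemp :: "nat \<Rightarrow> (nat \<Rightarrow> pauli) \<Rightarrow> nat \<Rightarrow> (nat \<Rightarrow> pauli) \<Rightarrow> nat set \<Rightarrow> real" where
  "Yemp n M N omega S = ln ((\<Sum>k<N. comm n (omega k) (pprod S M)) / real N)"

definition Xbase :: "(nat set \<Rightarrow> real) \<Rightarrow> nat set \<Rightarrow> real" where
  "Xbase Y J = 2 powr (- (real (card J) - 1)) * (\<Sum>S\<in>Pow J. (-1) ^ (card S + 1) * Y S)"

fun Xrec :: "nat \<Rightarrow> (nat set \<Rightarrow> real) \<Rightarrow> nat set set \<Rightarrow> nat set \<Rightarrow> real" where
  "Xrec 0 Y Js J = Xbase Y J"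
| "Xrec (Suc k) Y Js J = - (\<Sum>J'\<in>{J'\<in>Js. J \<subset> J'}. Xrec k Y Js J') + Xbase Y J"

text \<open>fuel m suffices since all syndromes are subsets of {..<m}\<close>
definition Xest :: "nat \<Rightarrow> (nat set \<Rightarrow> real) \<Rightarrow> nat set set \<Rightarrow> nat set \<Rightarrow> real" where
  "Xest m Y Js J = Xrec m Y Js J"

end

theory Submission
  imports Defs
begin

text \<open>Fourier inversion on each local support gives, for every set \<open>S\<close> of generators,
  \<open>log \<Lambda>(M\<^sub>S) = \<Sum>\<^sub>e log \<mu>\<^sub>e [e anticommutes with M\<^sub>S]\<close>. The alternating sum in \<open>Xbase\<close> turns these
  values into the sum of \<open>log \<nu>\<close> over all classes whose syndrome contains \<open>J\<close>, and the recursion peels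
  off the strict superclasses, so the estimator is exact at the true eigenvalues. It is linear in
  \<open>Y\<close>, hence its error is the estimator applied to the errors of the \<open>Y\<^sub>S\<close>; locality bounds the
  number of classes above \<open>J\<close> and the size of their syndromes independently of \<open>n\<close>, so the errors
  are amplified by a constant only. Locality also keeps every relevant \<open>\<Lambda>(M\<^sub>S)\<close> above a constant
  \<open>(2\<eta>)\<^sup>k\<close>, where \<open>log\<close> is Lipschitz, and Hoeffding's inequality with a union bound over the
  boundedly many relevant \<open>S\<close> gives the sample size.\<close>

section \<open>Probabilistic and analytic estimates\<close>

lemma expectation_Pi_pmf_component:
  fixes f :: "'b \<Rightarrow> real"
  assumes "finite A" and "x \<in> A"
  shows "measure_pmf.expectation (Pi_pmf A d p) (\<lambda>\<omega>. f (\<omega> x)) = measure_pmf.expectation (p x) f"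
proof -
  have "measure_pmf.expectation (Pi_pmf A d p) (\<lambda>\<omega>. f (\<omega> x))
      = measure_pmf.expectation (map_pmf (\<lambda>\<omega>. \<omega> x) (Pi_pmf A d p)) f"
    by simp
  then show ?thesis
    using Pi_pmf_component[OF assms(1), of x d p] assms(2) by simp
qed

lemma expectation_Pi_pmf_prod:
  fixes f :: "'b \<Rightarrow> 'a \<Rightarrow> real"
  assumes A: "finite A" and f: "\<And>x y. x \<in> A \<Longrightarrow> \<bar>f x y\<bar> \<le> 1"
  shows "measure_pmf.expectation (Pi_pmf A d p) (\<lambda>\<omega>. \<Prod>x\<in>A. f x (\<omega> x))
       = (\<Prod>x\<in>A. measure_pmf.expectation (p x) (f x))"
proof -
  let ?P = "measure_pmf (Pi_pmf A d p)"
  have indep: "prob_space.indep_vars ?P (\<lambda>_. borel) (\<lambda>x \<omega>. f x (\<omega> x)) A"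
    by (rule prob_space.indep_vars_compose2[OF prob_space_measure_pmf indep_vars_Pi_pmf[OF A]]) auto
  have integrable: "integrable ?P (\<lambda>\<omega>. f x (\<omega> x))" if "x \<in> A" for x
    by (rule measure_pmf.integrable_const_bound[where B = 1]) (use f[OF that] in auto)
  have "measure_pmf.expectation (Pi_pmf A d p) (\<lambda>\<omega>. \<Prod>x\<in>A. f x (\<omega> x))
      = (\<Prod>x\<in>A. measure_pmf.expectation (Pi_pmf A d p) (\<lambda>\<omega>. f x (\<omega> x)))"
    by (rule prob_space.indep_vars_lebesgue_integral[OF prob_space_measure_pmf A indep integrable])
  also have "\<dots> = (\<Prod>x\<in>A. measure_pmf.expectation (p x) (f x))"
    using expectation_Pi_pmf_component[OF A] by (intro prod.cong) auto
  finally show ?thesis .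
qed

lemma prob_Pi_pmf_mean_deviation_le:
  fixes D :: "'a pmf" and h :: "'a \<Rightarrow> real"
  assumes h: "\<And>x. \<bar>h x\<bar> \<le> 1" and N: "N > 0" and t: "t \<ge> 0"
  shows "measure_pmf.prob (Pi_pmf {..<N} d (\<lambda>_. D))
           {\<omega>. t \<le> \<bar>(\<Sum>k<N. h (\<omega> k)) / real N - measure_pmf.expectation D h\<bar>}
         \<le> 2 * exp (- real N * t\<^sup>2 / 2)"
proof -
  let ?P = "Pi_pmf {..<N} d (\<lambda>_. D)"
  let ?\<mu> = "measure_pmf.expectation D h"
  have mean: "measure_pmf.expectation ?P (\<lambda>\<omega>. h (\<omega> k)) = ?\<mu>" if "k \<in> {..<N}" for k
    using expectation_Pi_pmf_component[OF _ that] by simp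
  interpret Hoeffding_ineq ?P "{..<N}" "\<lambda>k \<omega>. h (\<omega> k)" "\<lambda>_. -1" "\<lambda>_. 1" "real N * ?\<mu>"
  proof unfold_locales
    show "prob_space.indep_vars ?P (\<lambda>_. borel) (\<lambda>k \<omega>. h (\<omega> k)) {..<N}"
      by (rule prob_space.indep_vars_compose2[OF prob_space_measure_pmf indep_vars_Pi_pmf]) auto
    show "real N * ?\<mu> \<equiv> (\<Sum>k\<in>{..<N}. measure_pmf.expectation ?P (\<lambda>\<omega>. h (\<omega> k)))"
      using mean by simp
  qed (use h in \<open>auto simp: abs_le_iff\<close>)
  have "(\<Sum>k\<in>{..<N}. ((1::real) - -1)\<^sup>2) > 0"
    using N by simp
  from Hoeffding_ineq_abs_ge[OF _ this, of "t * real N"]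
  have "measure_pmf.prob ?P {\<omega>. t * real N \<le> \<bar>(\<Sum>k<N. h (\<omega> k)) - real N * ?\<mu>\<bar>}
      \<le> 2 * exp (- real N * t\<^sup>2 / 2)"
    using N t by (simp add: power2_eq_square field_simps)
  moreover have "t \<le> \<bar>x / real N - ?\<mu>\<bar> \<longleftrightarrow> t * real N \<le> \<bar>x - real N * ?\<mu>\<bar>" for x
  proof -
    have "\<bar>x / real N - ?\<mu>\<bar> = \<bar>x - real N * ?\<mu>\<bar> / real N"
      using N by (simp add: field_simps)
    then show ?thesis
      using N by (simp add: pos_le_divide_eq)
  qed
  ultimately show ?thesis
    by simp
qed

lemma prob_ge_of_union_bound:
  fixes p :: "'a pmf"
  assumes I: "finite I"
    and good: "\<And>\<omega>. (\<And>i. i \<in> I \<Longrightarrow> \<omega> \<notin> B i) \<Longrightarrow> \<omega> \<in> A"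
    and bad: "\<And>i. i \<in> I \<Longrightarrow> measure_pmf.prob p (B i) \<le> q"
    and "real (card I) * q \<le> \<delta>"
  shows "measure_pmf.prob p A \<ge> 1 - \<delta>"
proof -
  have "measure_pmf.prob p (\<Union>i\<in>I. B i) \<le> (\<Sum>i\<in>I. measure_pmf.prob p (B i))"
    by (rule measure_pmf.finite_measure_subadditive_finite[OF I]) auto
  also have "\<dots> \<le> real (card I) * q"
    using sum_mono[OF bad] by simp
  finally have "measure_pmf.prob p (\<Union>i\<in>I. B i) \<le> \<delta>"
    using assms(4) by linarith
  moreover have "measure_pmf.prob p (UNIV - (\<Union>i\<in>I. B i)) \<le> measure_pmf.prob p A"
    using good by (intro measure_pmf.finite_measure_mono) auto
  moreover have "measure_pmf.prob p (UNIV - (\<Union>i\<in>I. B i)) = 1 - measure_pmf.prob p (\<Union>i\<in>I. B i)"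
    using measure_pmf.prob_compl[of "\<Union>i\<in>I. B i" p] by simp
  ultimately show ?thesis
    by linarith
qed

lemma abs_ln_diff_le:
  fixes x L :: real
  assumes L: "L > 0" and x: "\<bar>x - L\<bar> \<le> L / 2"
  shows "\<bar>ln x - ln L\<bar> \<le> 2 * \<bar>x - L\<bar> / L"
proof -
  have x_ge: "x \<ge> L / 2"
    using x by linarith
  then have x_pos: "x > 0"
    using L by simp
  have "ln x - ln L \<le> x / L - 1"
    using ln_le_minus_one[of "x / L"] x_pos L by (simp add: ln_div)
  also have "\<dots> = (x - L) / L"
    using L by (simp add: field_simps)
  also have "\<dots> \<le> 2 * \<bar>x - L\<bar> / L"
    using L by (intro divide_right_mono) (auto simp: abs_if)
  finally have upper: "ln x - ln L \<le> 2 * \<bar>x - L\<bar> / L" .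
  have "ln L - ln x \<le> L / x - 1"
    using ln_le_minus_one[of "L / x"] x_pos L by (simp add: ln_div)
  also have "\<dots> = (L - x) / x"
    using x_pos by (simp add: field_simps)
  also have "\<dots> \<le> \<bar>x - L\<bar> / (L / 2)"
    using x_ge L by (intro frac_le) auto
  finally have lower: "ln L - ln x \<le> 2 * \<bar>x - L\<bar> / L"
    by (simp add: mult.commute)
  show ?thesis
    using upper lower by linarith
qed

lemma union_tail_le_of_sample_size:
  fixes c Ns \<epsilon> \<delta> :: real
  assumes c: "c > 0" and Ns: "Ns \<ge> 1" and \<epsilon>: "\<epsilon> > 0" and \<delta>: "0 < \<delta>" "\<delta> < 1/2"
    and N: "real N \<ge> 2 / c\<^sup>2 * (1 + ln (2 * Ns) / ln 2) / \<epsilon>\<^sup>2 * ln (1 / \<delta>)"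
  shows "Ns * (2 * exp (- real N * (\<epsilon> * c)\<^sup>2 / 2)) \<le> \<delta>"
proof -
  define L where "L = ln (1 / \<delta>)"
  have L: "L \<ge> ln 2"
    unfolding L_def using \<delta> by (intro ln_mono) (auto simp: field_simps)
  have lnNs: "ln (2 * Ns) \<ge> 0"
    using Ns by simp
  have "real N * (\<epsilon> * c)\<^sup>2 / 2 \<ge> (1 + ln (2 * Ns) / ln 2) * L"
  proof -
    have "real N * (\<epsilon> * c)\<^sup>2 / 2 \<ge> 2 / c\<^sup>2 * (1 + ln (2 * Ns) / ln 2) / \<epsilon>\<^sup>2 * L * (\<epsilon> * c)\<^sup>2 / 2"
      using N unfolding L_def by (intro divide_right_mono mult_right_mono) auto
    also have "2 / c\<^sup>2 * (1 + ln (2 * Ns) / ln 2) / \<epsilon>\<^sup>2 * L * (\<epsilon> * c)\<^sup>2 / 2 = (1 + ln (2 * Ns) / ln 2) * L"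
      using c \<epsilon> by (simp add: field_simps power2_eq_square)
    finally show ?thesis .
  qed
  moreover have "(1 + ln (2 * Ns) / ln 2) * L \<ge> L + ln (2 * Ns)"
    using mult_right_mono[OF L, of "ln (2 * Ns) / ln 2"] lnNs by (simp add: algebra_simps)
  ultimately have "real N * (\<epsilon> * c)\<^sup>2 / 2 \<ge> L + ln (2 * Ns)"
    by linarith
  then have "exp (- real N * (\<epsilon> * c)\<^sup>2 / 2) \<le> exp (- (L + ln (2 * Ns)))"
    by simp
  also have "\<dots> = \<delta> / (2 * Ns)"
    unfolding L_def using \<delta> Ns by (simp add: exp_diff exp_minus ln_div field_simps)
  finally show ?thesis
    using Ns by (simp add: field_simps)
qed

section \<open>Phase-free Pauli algebra\<close>

definition qubit_sign :: "bool \<times> bool \<Rightarrow> bool \<times> bool \<Rightarrow> real" where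
  "qubit_sign x y = (if (fst x \<and> snd y) \<noteq> (snd x \<and> fst y) then -1 else 1)"

definition pauli_mult :: "pauli \<Rightarrow> pauli \<Rightarrow> pauli" where
  "pauli_mult a b = (\<lambda>j. (fst (a j) \<noteq> fst (b j), snd (a j) \<noteq> snd (b j)))"

lemma prod_if_neg_one:
  "finite A \<Longrightarrow> (\<Prod>j\<in>A. if P j then -1 else 1 :: real) = (-1) ^ card {j\<in>A. P j}"
  by (simp add: prod.If_cases Int_def)

lemma comm_eq_prod_qubit_sign: "comm n a b = (\<Prod>j<n. qubit_sign (a j) (b j))"
  unfolding comm_def symp_def qubit_sign_def by (simp add: prod_if_neg_one minus_one_power_iff)

lemma comm_commute: "comm n a b = comm n b a"
  unfolding comm_eq_prod_qubit_sign qubit_sign_def by (intro prod.cong) auto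

lemma comm_pauli_mult_right: "comm n h (pauli_mult a b) = comm n h a * comm n h b"
  unfolding comm_eq_prod_qubit_sign pauli_mult_def prod.distrib[symmetric]
  by (intro prod.cong) (auto simp: qubit_sign_def)

lemma comm_pauli_mult_left: "comm n (pauli_mult a b) h = comm n a h * comm n b h"
  using comm_pauli_mult_right comm_commute by metis

lemma comm_Iall: "comm n a Iall = 1" "comm n Iall a = 1"
  by (simp_all add: comm_eq_prod_qubit_sign Iall_def qubit_sign_def)

lemma comm_cases: "comm n a b = 1 \<or> comm n a b = -1"
  by (simp add: comm_def minus_one_power_iff)

lemma abs_comm: "\<bar>comm n a b\<bar> = 1"
  using comm_cases[of n a b] by auto

lemma symp_eq_1_iff: "symp n a b = 1 \<longleftrightarrow> comm n a b = -1"
  by (simp add: comm_def symp_def minus_one_power_iff odd_iff_mod_2_eq_one)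

lemma comm_cong_supported:
  assumes "supported_on a A" and "\<And>j. j \<in> A \<Longrightarrow> b j = b' j"
  shows "comm n a b = comm n a b'"
  unfolding comm_eq_prod_qubit_sign
proof (intro prod.cong refl)
  fix j
  show "qubit_sign (a j) (b j) = qubit_sign (a j) (b' j)"
    using assms unfolding supported_on_def by (cases "j \<in> A") (auto simp: qubit_sign_def)
qed

lemma comm_eq_neg_one_imp_overlap:
  assumes "comm n a b = -1"
  shows "\<exists>j<n. a j \<noteq> (False, False) \<and> b j \<noteq> (False, False)"
proof (rule ccontr)
  assume "\<not> ?thesis"
  then have "comm n a b = (\<Prod>j<n. 1)"
    unfolding comm_eq_prod_qubit_sign by (intro prod.cong) (auto simp: qubit_sign_def)
  with assms show False
    by simp
qed

lemma pprod_empty: "pprod {} M = Iall"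
  unfolding pprod_def Iall_def by auto

lemma pprod_insert:
  assumes "finite S" and "i \<notin> S"
  shows "pprod (insert i S) M = pauli_mult (M i) (pprod S M)"
proof -
  have card_filter_insert: "card {a\<in>insert i S. P a} = (if P i then Suc (card {a\<in>S. P a}) else card {a\<in>S. P a})"
    for P
  proof -
    have "{a\<in>insert i S. P a} = (if P i then insert i {a\<in>S. P a} else {a\<in>S. P a})"
      by auto
    then show ?thesis
      using assms by simp
  qed
  show ?thesis
    unfolding pprod_def pauli_mult_def card_filter_insert by (auto simp: fun_eq_iff)
qed

lemma comm_pprod: "finite S \<Longrightarrow> comm n h (pprod S M) = (\<Prod>i\<in>S. comm n h (M i))"
  by (induction S rule: finite_induct) (simp_all add: pprod_empty comm_Iall pprod_insert comm_pauli_mult_right)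

lemma pprod_nonidentity_imp:
  assumes "pprod S M j \<noteq> (False, False)"
  shows "\<exists>i\<in>S. M i j \<noteq> (False, False)"
proof (rule ccontr)
  assume "\<not> ?thesis"
  then have "{a\<in>S. fst (M a j)} = {}" and "{a\<in>S. snd (M a j)} = {}"
    by auto
  then have "pprod S M j = (False, False)"
    unfolding pprod_def by (simp only:) simp
  with assms show False ..
qed

lemma bij_betw_restrict_paulis_on:
  "bij_betw (\<lambda>p. restrict p A) (paulis_on A) (PiE A (\<lambda>_. UNIV))"
proof (rule bij_betw_byWitness[where f' = "\<lambda>q j. if j \<in> A then q j else (False, False)"])
  show "\<forall>a\<in>paulis_on A. (\<lambda>j. if j \<in> A then restrict a A j else (False, False)) = a"
    unfolding paulis_on_def supported_on_def by (auto simp: fun_eq_iff)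
  show "\<forall>a'\<in>PiE A (\<lambda>_. UNIV). restrict (\<lambda>j. if j \<in> A then a' j else (False, False)) A = a'"
    unfolding PiE_def extensional_def by (auto simp: fun_eq_iff)
  show "(\<lambda>q j. if j \<in> A then q j else (False, False)) ` PiE A (\<lambda>_. UNIV) \<subseteq> paulis_on A"
    unfolding paulis_on_def supported_on_def by auto
qed auto

lemma card_paulis_on:
  assumes "finite A"
  shows "card (paulis_on A) = 4 ^ card A"
proof -
  have "card (paulis_on A) = card (PiE A (\<lambda>_. UNIV :: (bool \<times> bool) set))"
    using bij_betw_same_card[OF bij_betw_restrict_paulis_on] .
  also have "\<dots> = 4 ^ card A"
    using assms by (simp add: card_PiE flip: UNIV_Times_UNIV)
  finally show ?thesis .
qed

lemma finite_paulis_on: "finite A \<Longrightarrow> finite (paulis_on A)"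
  using bij_betw_finite[OF bij_betw_restrict_paulis_on[of A]] by (simp add: finite_PiE)

lemma Iall_in_paulis_on: "Iall \<in> paulis_on A"
  unfolding paulis_on_def supported_on_def Iall_def by auto

lemma finite_nontriv_on: "finite A \<Longrightarrow> finite (nontriv_on A)"
  unfolding nontriv_on_def by (simp add: finite_paulis_on)

lemma card_nontriv_on_le: "finite A \<Longrightarrow> card (nontriv_on A) \<le> 4 ^ card A"
  unfolding nontriv_on_def using card_Diff1_le[of "paulis_on A" Iall] by (simp add: card_paulis_on)

lemma nontriv_on_nonidentity_in:
  "e \<in> nontriv_on A \<Longrightarrow> e j \<noteq> (False, False) \<Longrightarrow> j \<in> A"
  unfolding nontriv_on_def paulis_on_def supported_on_def by auto

lemma nontriv_on_ex_nonidentity: "f \<in> nontriv_on A \<Longrightarrow> \<exists>j\<in>A. f j \<noteq> (False, False)"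
  unfolding nontriv_on_def paulis_on_def supported_on_def Iall_def by (auto simp: fun_eq_iff)

section \<open>Fourier inversion of the channel eigenvalues\<close>

lemma sum_comm_paulis_on:
  assumes A: "finite A" "A \<subseteq> {..<n}"
  shows "(\<Sum>e\<in>paulis_on A. comm n h e)
       = (if \<forall>j\<in>A. h j = (False, False) then real (card (paulis_on A)) else 0)"
proof (cases "\<forall>j\<in>A. h j = (False, False)")
  case True
  have "comm n h e = comm n Iall e" if "e \<in> paulis_on A" for e
    using that True unfolding paulis_on_def by (subst (1 2) comm_commute, intro comm_cong_supported)
      (auto simp: Iall_def)
  then show ?thesis
    using True by (simp add: comm_Iall)
next
  case False
  then obtain j0 where j0: "j0 \<in> A" "h j0 \<noteq> (False, False)"
    by auto
  \<comment> \<open>Multiplication by \<open>t\<close>, which anticommutes with \<open>h\<close>, is an involution of \<open>paulis_on A\<close>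
     negating every term.\<close>
  define t :: pauli where "t = (\<lambda>j. if j = j0 then (\<not> fst (h j0), fst (h j0)) else (False, False))"
  have "comm n h t = (\<Prod>j<n. if j = j0 then qubit_sign (h j0) (t j0) else 1)"
    unfolding comm_eq_prod_qubit_sign by (intro prod.cong) (auto simp: t_def qubit_sign_def)
  also have "\<dots> = -1"
    using j0 A(2) unfolding t_def qubit_sign_def by (cases "h j0") auto
  finally have ht: "comm n h t = -1" .
  have t_in: "t \<in> paulis_on A"
    unfolding paulis_on_def supported_on_def t_def using j0 by auto
  have mult_t_twice: "pauli_mult (pauli_mult e t) t = e" for e
    unfolding pauli_mult_def by (auto simp: fun_eq_iff prod_eq_iff)
  have mult_t_in: "pauli_mult e t \<in> paulis_on A" if "e \<in> paulis_on A" for e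
    using that t_in unfolding paulis_on_def supported_on_def pauli_mult_def by auto
  have "(\<Sum>e\<in>paulis_on A. comm n h e) = (\<Sum>e\<in>paulis_on A. comm n h (pauli_mult e t))"
    by (rule sum.reindex_bij_witness[where i = "\<lambda>e. pauli_mult e t" and j = "\<lambda>e. pauli_mult e t"])
      (simp_all only: mult_t_twice mult_t_in)
  also have "\<dots> = - (\<Sum>e\<in>paulis_on A. comm n h e)"
    by (simp add: comm_pauli_mult_right ht sum_negf)
  finally show ?thesis
    using False by auto
qed

lemma sum_nontriv_comm_orthogonality:
  assumes A: "finite A" "A \<subseteq> {..<n}" and f': "f' \<in> nontriv_on A" and f: "f \<in> paulis_on A"
  shows "(\<Sum>e\<in>nontriv_on A. comm n f' e * (1 - comm n e f)) = (if f' = f then - (4 ^ card A) else 0)"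
proof -
  have "(\<Sum>e\<in>nontriv_on A. comm n f' e * (1 - comm n e f))
      = (\<Sum>e\<in>paulis_on A. comm n f' e * (1 - comm n e f))"
    using finite_paulis_on[OF A(1)] Iall_in_paulis_on[of A]
    by (simp add: nontriv_on_def sum.remove comm_Iall)
  also have "\<dots> = (\<Sum>e\<in>paulis_on A. comm n f' e) - (\<Sum>e\<in>paulis_on A. comm n (pauli_mult f' f) e)"
    by (simp add: comm_pauli_mult_left algebra_simps sum_subtractf comm_commute[of n _ f])
  also have "(\<Sum>e\<in>paulis_on A. comm n f' e) = 0"
    using sum_comm_paulis_on[OF A, of f'] nontriv_on_ex_nonidentity[OF f'] by auto
  also have "(\<forall>j\<in>A. pauli_mult f' f j = (False, False)) \<longleftrightarrow> f' = f"
    using f f' unfolding nontriv_on_def paulis_on_def supported_on_def pauli_mult_def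
    by (auto simp: fun_eq_iff prod_eq_iff)
  then have "(\<Sum>e\<in>paulis_on A. comm n (pauli_mult f' f) e) = (if f' = f then 4 ^ card A else 0)"
    using sum_comm_paulis_on[OF A, of "pauli_mult f' f"] card_paulis_on[OF A(1)] by simp
  finally show ?thesis
    by simp
qed

lemma loclam_Iall:
  assumes "finite (supp g)" and "set_pmf (Pg g) \<subseteq> paulis_on (supp g)"
  shows "loclam n supp Pg g Iall = 1"
  unfolding loclam_def comm_Iall using sum_pmf_eq_1[OF finite_paulis_on[OF assms(1)] assms(2)] by simp

lemma ln_loclam_eq_sum_logmu_on:
  assumes A: "finite (supp g)" "supp g \<subseteq> {..<n}"
    and Pg: "set_pmf (Pg g) \<subseteq> paulis_on (supp g)" and f: "f \<in> paulis_on (supp g)"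
  shows "(\<Sum>e\<in>nontriv_on (supp g). logmu n supp Pg g e * ((1 - comm n e f) / 2))
       = ln (loclam n supp Pg g f)"
proof -
  define c :: real where "c = 4 ^ card (supp g)"
  define L where "L f' = ln (loclam n supp Pg g f')" for f'
  let ?E = "nontriv_on (supp g)"
  have "(\<Sum>e\<in>?E. logmu n supp Pg g e * ((1 - comm n e f) / 2))
      = (\<Sum>e\<in>?E. \<Sum>f'\<in>?E. - (L f' / c) * (comm n f' e * (1 - comm n e f)))"
    unfolding logmu_def L_def c_def sum_distrib_left sum_distrib_right
    by (intro sum.cong refl) (simp add: field_simps)
  also have "\<dots> = (\<Sum>f'\<in>?E. - (L f' / c) * (\<Sum>e\<in>?E. comm n f' e * (1 - comm n e f)))"
    by (subst sum.swap) (simp add: sum_distrib_left)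
  also have "\<dots> = (\<Sum>f'\<in>?E. if f' = f then L f else 0)"
    using sum_nontriv_comm_orthogonality[OF A, of _ f] f by (intro sum.cong) (auto simp: c_def)
  also have "\<dots> = L f"
    using f finite_nontriv_on[OF A(1)] loclam_Iall[of supp g Pg, OF A(1) Pg]
    by (auto simp: L_def nontriv_on_def)
  finally show ?thesis
    unfolding L_def .
qed

lemma ln_loclam_eq_sum_logmu:
  assumes A: "finite (supp g)" "supp g \<subseteq> {..<n}" and Pg: "set_pmf (Pg g) \<subseteq> paulis_on (supp g)"
  shows "(\<Sum>e\<in>nontriv_on (supp g). logmu n supp Pg g e * ((1 - comm n e P) / 2))
       = ln (loclam n supp Pg g P)"
proof -
  define P' :: pauli where "P' = (\<lambda>j. if j \<in> supp g then P j else (False, False))"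
  have P': "P' \<in> paulis_on (supp g)"
    unfolding P'_def paulis_on_def supported_on_def by auto
  have comm_P': "comm n h P = comm n h P'" if "h \<in> paulis_on (supp g)" for h
    using that unfolding paulis_on_def by (intro comm_cong_supported) (auto simp: P'_def)
  have "loclam n supp Pg g P = loclam n supp Pg g P'"
    unfolding loclam_def by (intro sum.cong refl) (simp add: comm_P')
  moreover have "(\<Sum>e\<in>nontriv_on (supp g). logmu n supp Pg g e * ((1 - comm n e P) / 2))
      = (\<Sum>e\<in>nontriv_on (supp g). logmu n supp Pg g e * ((1 - comm n e P') / 2))"
    by (intro sum.cong refl) (simp add: comm_P' nontriv_on_def)
  ultimately show ?thesis
    using ln_loclam_eq_sum_logmu_on[of supp g n Pg, OF A Pg P'] by simp
qed

definition Lambda :: "nat \<Rightarrow> nat set \<Rightarrow> (nat \<Rightarrow> pauli pmf) \<Rightarrow> pauli \<Rightarrow> real" where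
  "Lambda n Gam Pg P = measure_pmf.expectation (Ptot Gam Pg) (\<lambda>e. comm n e P)"

lemma Lambda_eq_prod_loclam:
  assumes Gam: "finite Gam"
    and supp: "\<And>g. g \<in> Gam \<Longrightarrow> finite (supp g)"
    and Pg: "\<And>g. g \<in> Gam \<Longrightarrow> set_pmf (Pg g) \<subseteq> paulis_on (supp g)"
  shows "Lambda n Gam Pg P = (\<Prod>g\<in>Gam. loclam n supp Pg g P)"
proof -
  have "Lambda n Gam Pg P
      = measure_pmf.expectation (Pi_pmf Gam Iall Pg) (\<lambda>\<omega>. \<Prod>g\<in>Gam. comm n (\<omega> g) P)"
    unfolding Lambda_def Ptot_def integral_map_pmf
    by (simp add: comm_commute[of n _ P] comm_pprod[OF Gam])
  also have "\<dots> = (\<Prod>g\<in>Gam. measure_pmf.expectation (Pg g) (\<lambda>v. comm n v P))"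
    by (rule expectation_Pi_pmf_prod[OF Gam]) (simp add: abs_comm)
  also have "\<dots> = (\<Prod>g\<in>Gam. loclam n supp Pg g P)"
  proof (intro prod.cong refl)
    fix g assume "g \<in> Gam"
    then show "measure_pmf.expectation (Pg g) (\<lambda>v. comm n v P) = loclam n supp Pg g P"
      unfolding loclam_def using Pg supp
      by (subst integral_measure_pmf_real[OF finite_paulis_on]) (auto simp: mult.commute)
  qed
  finally show ?thesis .
qed

lemma loclam_ge:
  assumes A: "finite (supp g)" and Pg: "set_pmf (Pg g) \<subseteq> paulis_on (supp g)"
  shows "loclam n supp Pg g P \<ge> 2 * pmf (Pg g) Iall - 1"
proof -
  let ?A = "paulis_on (supp g) - {Iall}"
  have fin: "finite (paulis_on (supp g))"
    using finite_paulis_on[OF A] .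
  have "(\<Sum>h\<in>?A. pmf (Pg g) h) = 1 - pmf (Pg g) Iall"
    using sum_pmf_eq_1[OF fin Pg] fin Iall_in_paulis_on by (simp add: sum_diff1)
  moreover have "(\<Sum>h\<in>?A. - pmf (Pg g) h) \<le> (\<Sum>h\<in>?A. pmf (Pg g) h * comm n h P)"
  proof (intro sum_mono)
    fix h
    show "- pmf (Pg g) h \<le> pmf (Pg g) h * comm n h P"
      using comm_cases[of n h P] pmf_nonneg[of "Pg g" h] by auto
  qed
  moreover have "loclam n supp Pg g P = pmf (Pg g) Iall + (\<Sum>h\<in>?A. pmf (Pg g) h * comm n h P)"
    unfolding loclam_def using fin Iall_in_paulis_on[of "supp g"] by (simp add: sum.remove comm_Iall)
  ultimately show ?thesis
    by (simp add: sum_negf)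
qed

lemma loclam_eq_1_if_disjoint:
  assumes A: "finite (supp g)" and Pg: "set_pmf (Pg g) \<subseteq> paulis_on (supp g)"
    and P: "\<forall>j\<in>supp g. P j = (False, False)"
  shows "loclam n supp Pg g P = 1"
proof -
  have "comm n h P = comm n h Iall" if "h \<in> paulis_on (supp g)" for h
    using that P unfolding paulis_on_def by (intro comm_cong_supported) (auto simp: Iall_def)
  then have "loclam n supp Pg g P = loclam n supp Pg g Iall"
    unfolding loclam_def by (intro sum.cong refl) simp
  then show ?thesis
    using loclam_Iall[of supp g Pg, OF A Pg] by simp
qed

section \<open>The recursive estimator\<close>

lemma sum_Pow_prod_eq_prod_plus_1:
  "finite J \<Longrightarrow> (\<Sum>S\<in>Pow J. \<Prod>j\<in>S. a j) = (\<Prod>j\<in>J. a j + (1::real))"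
  using prod_add[of J a "\<lambda>_. 1"] by simp

lemma sum_Pow_alternating_parity:
  assumes J: "finite J" "J \<noteq> {}"
  shows "(\<Sum>S\<in>Pow J. (-1) ^ (card S + 1) * ((1 - (-1) ^ card (S \<inter> T)) / 2))
       = (if J \<subseteq> T then 2 ^ (card J - 1) else (0::real))"
proof -
  have "(-1) ^ (card S + 1) * ((1 - (-1) ^ card (S \<inter> T)) / 2)
      = (1/2) * (\<Prod>j\<in>S. if j \<in> T then 1 else -1) - (1/2) * (\<Prod>j\<in>S. -1 :: real)"
    if "S \<in> Pow J" for S
  proof -
    have S: "finite S"
      using that J(1) finite_subset by auto
    have "(-1 :: real) ^ card (S \<inter> T) = (\<Prod>j\<in>S. if j \<in> T then -1 else 1)"
      using prod_if_neg_one[OF S, of "\<lambda>j. j \<in> T"] by (simp add: Int_def)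
    moreover have "(\<Prod>j\<in>S. if j \<in> T then 1 else -1 :: real) = (\<Prod>j\<in>S. -1) * (\<Prod>j\<in>S. if j \<in> T then -1 else 1)"
      unfolding prod.distrib[symmetric] by (intro prod.cong) auto
    ultimately show ?thesis
      by (simp add: field_simps)
  qed
  then have "(\<Sum>S\<in>Pow J. (-1) ^ (card S + 1) * ((1 - (-1) ^ card (S \<inter> T)) / 2))
      = (\<Sum>S\<in>Pow J. (1/2) * (\<Prod>j\<in>S. if j \<in> T then 1 else -1) - (1/2) * (\<Prod>j\<in>S. -1 :: real))"
    by (rule sum.cong[OF refl])
  also have "\<dots> = (1/2) * (\<Sum>S\<in>Pow J. \<Prod>j\<in>S. if j \<in> T then 1 else -1)
                  - (1/2) * (\<Sum>S\<in>Pow J. \<Prod>j\<in>S. -1 :: real)"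
    by (simp only: sum_subtractf sum_distrib_left)
  also have "\<dots> = (1/2) * (\<Prod>j\<in>J. (if j \<in> T then 1 else -1) + 1) - (1/2) * (\<Prod>j\<in>J. -1 + 1 :: real)"
    by (simp only: sum_Pow_prod_eq_prod_plus_1[OF J(1)])
  also have "\<dots> = (if J \<subseteq> T then 2 ^ (card J - 1) else 0)"
  proof -
    have "(\<Prod>j\<in>J. -1 + 1 :: real) = 0"
      using J by (simp add: card_gt_0_iff)
    moreover have "(\<Prod>j\<in>J. (if j \<in> T then 1 else -1) + 1 :: real) = (if J \<subseteq> T then 2 ^ card J else 0)"
      using J(1) by (auto simp: subset_iff prod_zero_iff)
    ultimately show ?thesis
      using J by (simp add: power_eq_if[of 2 "card J"] card_gt_0_iff)
  qed
  finally show ?thesis .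
qed

lemma Xbase_eq_sum_covering:
  assumes J: "finite J" "J \<noteq> {}" and X: "finite X"
    and Y: "\<And>S. S \<subseteq> J \<Longrightarrow> Y S = (\<Sum>x\<in>X. w x * ((1 - (-1) ^ card (S \<inter> T x)) / 2))"
  shows "Xbase Y J = (\<Sum>x\<in>{x\<in>X. J \<subseteq> T x}. w x)"
proof -
  have "(\<Sum>S\<in>Pow J. (-1) ^ (card S + 1) * Y S)
      = (\<Sum>x\<in>X. w x * (\<Sum>S\<in>Pow J. (-1) ^ (card S + 1) * ((1 - (-1) ^ card (S \<inter> T x)) / 2)))"
    by (simp add: Y sum_distrib_left mult_ac sum.swap[of _ "Pow J"])
  also have "\<dots> = (\<Sum>x\<in>X. w x * (if J \<subseteq> T x then 2 ^ (card J - 1) else 0))"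
    by (simp only: sum_Pow_alternating_parity[OF J])
  also have "\<dots> = 2 ^ (card J - 1) * (\<Sum>x\<in>{x\<in>X. J \<subseteq> T x}. w x)"
    using X by (simp add: sum.inter_filter[symmetric] sum_distrib_left mult_ac if_distrib cong: if_cong)
  moreover have "(2::real) powr (- (real (card J) - 1)) * 2 ^ (card J - 1) = 1"
    using J by (simp add: powr_realpow[symmetric] of_nat_diff Suc_le_eq card_gt_0_iff flip: powr_add)
  ultimately show ?thesis
    unfolding Xbase_def by (simp add: mult.assoc[symmetric])
qed

text \<open>Every recursive call moves to a strictly larger subset of \<open>{..<m}\<close>, so fuel
  \<open>m - card J\<close> suffices.\<close>
lemma Xrec_eq_of_Xbase:
  assumes Js: "finite Js" and sub: "\<And>y. y \<in> Js \<Longrightarrow> y \<subseteq> {..<m}"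
    and base: "\<And>J. J \<noteq> {} \<Longrightarrow> J \<subseteq> {..<m} \<Longrightarrow> Xbase Y J = (\<Sum>y\<in>{y\<in>Js. J \<subseteq> y}. lg y)"
    and J: "J \<in> Js" "J \<noteq> {}" and k: "m \<le> k + card J"
  shows "Xrec k Y Js J = lg J"
  using J k
proof (induction k arbitrary: J)
  case 0
  have "J \<subseteq> {..<m}" and "card {..<m} \<le> card J"
    using sub 0 by auto
  then have "J = {..<m}"
    using card_seteq[of "{..<m}" J] by auto
  then have "{y\<in>Js. J \<subseteq> y} = {J}"
    using 0 sub by auto
  then show ?case
    using base[of J] 0 sub by simp
next
  case (Suc k)
  have Jm: "J \<subseteq> {..<m}"
    using sub Suc by auto
  have IH: "Xrec k Y Js y = lg y" if "y \<in> {y\<in>Js. J \<subset> y}" for y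
  proof -
    have "finite y"
      using that sub finite_subset by blast
    then have "card J < card y"
      using that psubset_card_mono by auto
    then show ?thesis
      using Suc.IH[of y] that Suc.prems by auto
  qed
  have "{y\<in>Js. J \<subseteq> y} = insert J {y\<in>Js. J \<subset> y}"
    using Suc.prems by auto
  then have "Xbase Y J = lg J + (\<Sum>y\<in>{y\<in>Js. J \<subset> y}. lg y)"
    using base[OF Suc.prems(2) Jm] Js by simp
  then show ?case
    using IH by simp
qed

lemma Xbase_diff: "Xbase Y1 J - Xbase Y2 J = Xbase (\<lambda>S. Y1 S - Y2 S) J"
  unfolding Xbase_def right_diff_distrib[symmetric] sum_subtractf[symmetric] by (simp add: right_diff_distrib)

lemma Xrec_diff: "Xrec k Y1 Js J - Xrec k Y2 Js J = Xrec k (\<lambda>S. Y1 S - Y2 S) Js J"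
proof (induction k arbitrary: J)
  case (Suc k)
  have "Xrec (Suc k) Y1 Js J - Xrec (Suc k) Y2 Js J
      = - (\<Sum>J'\<in>{J'\<in>Js. J \<subset> J'}. Xrec k Y1 Js J' - Xrec k Y2 Js J') + (Xbase Y1 J - Xbase Y2 J)"
    by (simp add: sum_subtractf)
  then show ?case
    by (simp add: Suc.IH Xbase_diff)
qed (simp add: Xbase_diff)

lemma abs_Xbase_le:
  assumes J: "finite J" and D: "\<And>S. S \<subseteq> J \<Longrightarrow> \<bar>D S\<bar> \<le> b"
  shows "\<bar>Xbase D J\<bar> \<le> 2 * b"
proof -
  have "\<bar>\<Sum>S\<in>Pow J. (-1) ^ (card S + 1) * D S\<bar> \<le> (\<Sum>S\<in>Pow J. b)"
    using D by (intro order_trans[OF sum_abs sum_mono]) (simp add: abs_mult)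
  also have "\<dots> = 2 ^ card J * b"
    using J by (simp add: card_Pow)
  finally have "\<bar>Xbase D J\<bar> \<le> 2 powr (- (real (card J) - 1)) * (2 ^ card J * b)"
    unfolding Xbase_def by (simp add: abs_mult mult_left_mono)
  also have "\<dots> = 2 * b"
    by (simp add: powr_realpow[symmetric] powr_add[symmetric])
  finally show ?thesis .
qed

lemma abs_Xrec_Suc_le:
  assumes Js: "finite Js" and q: "card {y\<in>Js. J \<subset> y} \<le> q"
    and X: "\<And>y. y \<in> Js \<Longrightarrow> J \<subset> y \<Longrightarrow> \<bar>Xrec k D Js y\<bar> \<le> X"
    and base: "\<bar>Xbase D J\<bar> \<le> X"
  shows "\<bar>Xrec (Suc k) D Js J\<bar> \<le> (real q + 1) * X"
proof -
  have "\<bar>\<Sum>y\<in>{y\<in>Js. J \<subset> y}. Xrec k D Js y\<bar> \<le> (\<Sum>y\<in>{y\<in>Js. J \<subset> y}. X)"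
    using X by (intro order_trans[OF sum_abs sum_mono]) auto
  also have "\<dots> \<le> real q * X"
    using q base abs_ge_zero[of "Xbase D J"] by (simp add: mult_right_mono)
  finally show ?thesis
    using base by (simp add: algebra_simps)
qed

lemma abs_Xrec_le:
  assumes Js: "finite Js"
    and q: "card {y\<in>Js. J \<subseteq> y} \<le> q"
    and s: "\<And>y. y \<in> Js \<Longrightarrow> J \<subseteq> y \<Longrightarrow> finite y \<and> card y \<le> s"
    and D: "\<And>y S. y \<in> Js \<Longrightarrow> J \<subseteq> y \<Longrightarrow> S \<subseteq> y \<Longrightarrow> \<bar>D S\<bar> \<le> b"
    and J': "J' \<in> Js" "J \<subseteq> J'"
  shows "\<bar>Xrec k D Js J'\<bar> \<le> 2 * b * (real q + 1) ^ (s - card J')"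
proof -
  have "b \<ge> 0"
    using D[OF J', of "{}"] by simp
  have base: "\<bar>Xbase D J'\<bar> \<le> 2 * b * (real q + 1) ^ i" if "J' \<in> Js" "J \<subseteq> J'" for J' i
  proof -
    have "\<bar>Xbase D J'\<bar> \<le> 2 * b"
      using that s D by (intro abs_Xbase_le) auto
    also have "\<dots> \<le> 2 * b * (real q + 1) ^ i"
      using \<open>b \<ge> 0\<close> by (simp add: mult_le_cancel_left1)
    finally show ?thesis .
  qed
  show ?thesis
    using J'
  proof (induction k arbitrary: J')
    case (Suc k)
    show ?case
    proof (cases "\<exists>y\<in>Js. J' \<subset> y")
      case False
      then show ?thesis
        using abs_Xrec_Suc_le[OF Js, of J' 0] base[OF Suc.prems] by (simp add: card_eq_0_iff)
    next
      case True
      then obtain y0 where "y0 \<in> Js" "J' \<subset> y0"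
        by blast
      then have "card J' < card y0" "card y0 \<le> s"
        using s[of y0] Suc.prems by (auto intro: psubset_card_mono)
      define t where "t = s - card J' - 1"
      have t: "s - card J' = Suc t"
        using \<open>card J' < card y0\<close> \<open>card y0 \<le> s\<close> unfolding t_def by linarith
      have "\<bar>Xrec (Suc k) D Js J'\<bar> \<le> (real q + 1) * (2 * b * (real q + 1) ^ t)"
      proof (rule abs_Xrec_Suc_le[OF Js _ _ base[OF Suc.prems]])
        have "card {y\<in>Js. J' \<subset> y} \<le> card {y\<in>Js. J \<subseteq> y}"
          using Js Suc.prems by (intro card_mono) auto
        then show "card {y\<in>Js. J' \<subset> y} \<le> q"
          using q by linarith
        fix y assume "y \<in> Js" "J' \<subset> y"
        then have "J \<subseteq> y" and "card J' < card y"
          using s[of y] Suc.prems by (auto intro: psubset_card_mono)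
        then have "2 * b * (real q + 1) ^ (s - card y) \<le> 2 * b * (real q + 1) ^ t"
          using t \<open>b \<ge> 0\<close> by (intro mult_left_mono power_increasing) auto
        then show "\<bar>Xrec k D Js y\<bar> \<le> 2 * b * (real q + 1) ^ t"
          using Suc.IH[OF \<open>y \<in> Js\<close> \<open>J \<subseteq> y\<close>] by linarith
      qed
      then show ?thesis
        unfolding t by (simp add: algebra_simps)
    qed
  qed (simp add: base)
qed

section \<open>Locality\<close>

lemma card_UN_le_const:
  assumes "finite I" and "\<And>i. i \<in> I \<Longrightarrow> card (A i) \<le> c"
  shows "card (\<Union>i\<in>I. A i) \<le> card I * c"
  using card_UN_le[OF assms(1), of A] sum_mono[of I "\<lambda>i. card (A i)" "\<lambda>_. c"] assms(2) by simp

lemma card_supports_meeting_le: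
  assumes W: "finite W" "W \<subseteq> {..<n}" and deg: "\<forall>j<n. card {g\<in>Gam. j \<in> supp g} \<le> cG"
  shows "card {g\<in>Gam. \<exists>j\<in>W. j \<in> supp g} \<le> card W * cG"
proof -
  have "{g\<in>Gam. \<exists>j\<in>W. j \<in> supp g} = (\<Union>j\<in>W. {g\<in>Gam. j \<in> supp g})"
    by auto
  also have "card \<dots> \<le> card W * cG"
    using W deg by (intro card_UN_le_const) auto
  finally show ?thesis .
qed

lemma support_pprod:
  assumes S: "finite S" and M: "\<And>i. i \<in> S \<Longrightarrow> supported_on (M i) {..<n} \<and> weight (M i) \<le> rs"
  shows "{j. pprod S M j \<noteq> (False, False)} \<subseteq> {..<n}"
    and "card {j. pprod S M j \<noteq> (False, False)} \<le> card S * rs"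
proof -
  have sub: "{j. pprod S M j \<noteq> (False, False)} \<subseteq> (\<Union>i\<in>S. {j. M i j \<noteq> (False, False)})"
    using pprod_nonidentity_imp by fastforce
  have supp_M: "{j. M i j \<noteq> (False, False)} \<subseteq> {..<n}" if "i \<in> S" for i
    using M[OF that] unfolding supported_on_def by auto
  then show "{j. pprod S M j \<noteq> (False, False)} \<subseteq> {..<n}"
    using sub by blast
  have "finite (\<Union>i\<in>S. {j. M i j \<noteq> (False, False)})"
    using S supp_M finite_subset by blast
  then have "card {j. pprod S M j \<noteq> (False, False)} \<le> card (\<Union>i\<in>S. {j. M i j \<noteq> (False, False)})"
    using sub by (rule card_mono)
  also have "\<dots> \<le> card S * rs"
    using M by (intro card_UN_le_const[OF S]) (auto simp: weight_def)
  finally show "card {j. pprod S M j \<noteq> (False, False)} \<le> card S * rs" .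
qed

lemma card_synd_le:
  assumes e: "e \<in> nontriv_on A" and A: "finite A" "A \<subseteq> {..<n}"
    and deg: "\<forall>j<n. card {i\<in>{..<m}. M i j \<noteq> (False, False)} \<le> cs"
  shows "card (synd n m M e) \<le> card A * cs"
proof -
  have "synd n m M e \<subseteq> (\<Union>j\<in>A. {i\<in>{..<m}. M i j \<noteq> (False, False)})"
  proof
    fix i assume i: "i \<in> synd n m M e"
    then have "comm n e (M i) = -1" and "i < m"
      unfolding synd_def using symp_eq_1_iff by auto
    then obtain j where "e j \<noteq> (False, False)" "M i j \<noteq> (False, False)"
      using comm_eq_neg_one_imp_overlap by blast
    then show "i \<in> (\<Union>j\<in>A. {i\<in>{..<m}. M i j \<noteq> (False, False)})"
      using nontriv_on_nonidentity_in[OF e] \<open>i < m\<close> by auto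
  qed
  then have "card (synd n m M e) \<le> card (\<Union>j\<in>A. {i\<in>{..<m}. M i j \<noteq> (False, False)})"
    using A(1) by (intro card_mono) auto
  also have "\<dots> \<le> card A * cs"
    using A deg by (intro card_UN_le_const) auto
  finally show ?thesis .
qed

lemma comm_pprod_synd:
  assumes S: "S \<subseteq> {..<m}"
  shows "comm n e (pprod S M) = (-1) ^ card (S \<inter> synd n m M e)"
proof -
  have "finite S"
    using S finite_subset by blast
  then have "comm n e (pprod S M) = (\<Prod>i\<in>S. if i \<in> synd n m M e then -1 else 1)"
    unfolding comm_pprod[OF \<open>finite S\<close>]
  proof (intro prod.cong refl)
    fix i assume "i \<in> S"
    then show "comm n e (M i) = (if i \<in> synd n m M e then -1 else 1)"
      using S symp_eq_1_iff[of n e "M i"] comm_cases[of n e "M i"] unfolding synd_def by auto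
  qed
  also have "\<dots> = (-1) ^ card (S \<inter> synd n m M e)"
    using \<open>finite S\<close> by (simp add: prod_if_neg_one Int_def)
  finally show ?thesis .
qed

lemma violating_errors_subset:
  "{x\<in>EG Gam supp. i \<in> synd n m M (snd x)}
     \<subseteq> Sigma {g\<in>Gam. \<exists>j\<in>{j. M i j \<noteq> (False, False)}. j \<in> supp g} (\<lambda>g. nontriv_on (supp g))"
proof
  fix x assume x: "x \<in> {x\<in>EG Gam supp. i \<in> synd n m M (snd x)}"
  then obtain g e where ge: "x = (g, e)" "g \<in> Gam" "e \<in> nontriv_on (supp g)"
    unfolding EG_def by auto
  have "comm n e (M i) = -1"
    using x ge(1) unfolding synd_def using symp_eq_1_iff by auto
  then obtain j where "e j \<noteq> (False, False)" "M i j \<noteq> (False, False)"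
    using comm_eq_neg_one_imp_overlap by blast
  then show "x \<in> Sigma {g\<in>Gam. \<exists>j\<in>{j. M i j \<noteq> (False, False)}. j \<in> supp g} (\<lambda>g. nontriv_on (supp g))"
    using ge nontriv_on_nonidentity_in by blast
qed

lemma finite_EG:
  assumes "finite Gam" and "\<forall>g\<in>Gam. supp g \<subseteq> {..<n}"
  shows "finite (EG Gam supp)"
  unfolding EG_def using assms finite_nontriv_on finite_subset by blast

section \<open>Local sparse channels on qLDPC codes\<close>

locale local_sparse_code =
  fixes rG cG rs cs :: nat and \<eta> :: real
    and n m :: nat and Gam :: "nat set" and supp :: "nat \<Rightarrow> nat set"
    and Pg :: "nat \<Rightarrow> pauli pmf" and M :: "nat \<Rightarrow> pauli"
  assumes eta_pos: "\<eta> > 0"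
    and finite_Gam: "finite Gam"
    and supp_sub: "\<And>g. g \<in> Gam \<Longrightarrow> supp g \<subseteq> {..<n}"
    and card_supp_le: "\<And>g. g \<in> Gam \<Longrightarrow> card (supp g) \<le> rG"
    and supp_degree: "\<forall>j<n. card {g\<in>Gam. j \<in> supp g} \<le> cG"
    and set_Pg: "\<And>g. g \<in> Gam \<Longrightarrow> set_pmf (Pg g) \<subseteq> paulis_on (supp g)"
    and Pg_Iall: "\<And>g. g \<in> Gam \<Longrightarrow> pmf (Pg g) Iall \<ge> 1/2 + \<eta>"
    and M_bounded: "\<And>i. i < m \<Longrightarrow> supported_on (M i) {..<n} \<and> weight (M i) \<le> rs"
    and M_degree: "\<forall>j<n. card {i\<in>{..<m}. M i j \<noteq> (False, False)} \<le> cs"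
begin

abbreviation classes :: "nat set set" where
  "classes \<equiv> class_synds n m M Gam supp"

abbreviation Lam :: "nat set \<Rightarrow> real" where
  "Lam S \<equiv> Lambda n Gam Pg (pprod S M)"

definition emp_mean :: "nat \<Rightarrow> (nat \<Rightarrow> pauli) \<Rightarrow> nat set \<Rightarrow> real" where
  "emp_mean N \<omega> S = (\<Sum>k<N. comm n (\<omega> k) (pprod S M)) / real N"

definition relevant_subsets :: "nat set \<Rightarrow> nat set set" where
  "relevant_subsets J = (\<Union>y\<in>{y\<in>classes. J \<subseteq> y}. Pow y)"

definition synd_card_bound :: nat where
  "synd_card_bound = rG * cs"

definition classes_per_generator :: nat where
  "classes_per_generator = rs * cG * 4 ^ rG"

text \<open>Every relevant \<open>\<Lambda>(M\<^sub>S)\<close> is at least \<open>eig_floor\<close>; the estimator amplifies errors in the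
  \<open>Y\<^sub>S\<close> by at most \<open>error_gain\<close>; each empirical mean may deviate by \<open>\<epsilon> * margin\<close>.\<close>
definition eig_floor :: real where
  "eig_floor = (2 * \<eta>) ^ (synd_card_bound * rs * cG)"

definition error_gain :: real where
  "error_gain = 2 * (real classes_per_generator + 1) ^ synd_card_bound"

definition margin :: real where
  "margin = eig_floor / (2 * error_gain)"

definition subset_count :: real where
  "subset_count = real classes_per_generator * 2 ^ synd_card_bound + 1"

text \<open>Chosen so that \<open>N (\<epsilon> margin)\<^sup>2 / 2 \<ge> ln (1/\<delta>) + ln (2 subset_count)\<close>, using \<open>ln (1/\<delta>) \<ge> ln 2\<close>.\<close>
definition sample_const :: real where
  "sample_const = 2 / margin\<^sup>2 * (1 + ln (2 * subset_count) / ln 2)"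

lemma finite_supp: "g \<in> Gam \<Longrightarrow> finite (supp g)"
  using supp_sub finite_subset by blast

lemma loclam_pos: "g \<in> Gam \<Longrightarrow> loclam n supp Pg g P > 0"
  using loclam_ge[of supp g Pg n P, OF finite_supp set_Pg] Pg_Iall[of g] eta_pos by linarith

lemma two_eta_le_1:
  assumes "J \<in> classes"
  shows "2 * \<eta> \<le> 1"
proof -
  obtain g where "g \<in> Gam"
    using assms unfolding class_synds_def EG_def by auto
  then show ?thesis
    using Pg_Iall[of g] pmf_le_1[of "Pg g" Iall] by linarith
qed

lemma finite_EG_Gam: "finite (EG Gam supp)"
  using finite_EG[OF finite_Gam] supp_sub by blast

lemma finite_classes: "finite classes"
  unfolding class_synds_def using finite_EG_Gam by blast

lemma classes_sub: "y \<in> classes \<Longrightarrow> y \<subseteq> {..<m}"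
  unfolding class_synds_def synd_def by auto

lemma finite_class: "y \<in> classes \<Longrightarrow> finite y"
  using classes_sub finite_subset[OF _ finite_lessThan] by blast

lemma card_classes_le: "y \<in> classes \<Longrightarrow> card y \<le> synd_card_bound"
proof -
  assume "y \<in> classes"
  then obtain g e where g: "g \<in> Gam" and e: "e \<in> nontriv_on (supp g)" and y: "y = synd n m M e"
    unfolding class_synds_def EG_def by auto
  have "card y \<le> card (supp g) * cs"
    unfolding y using card_synd_le[OF e finite_supp[OF g] supp_sub[OF g] M_degree] .
  also have "\<dots> \<le> synd_card_bound"
    unfolding synd_card_bound_def using card_supp_le[OF g] by simp
  finally show ?thesis .
qed

lemma ln_Lam_eq_sum_logmu:
  assumes S: "S \<subseteq> {..<m}"
  shows "ln (Lam S) = (\<Sum>x\<in>EG Gam supp.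
           logmu n supp Pg (fst x) (snd x) * ((1 - (-1) ^ card (S \<inter> synd n m M (snd x))) / 2))"
proof -
  have "ln (Lam S) = (\<Sum>g\<in>Gam. ln (loclam n supp Pg g (pprod S M)))"
    using Lambda_eq_prod_loclam[OF finite_Gam finite_supp set_Pg] loclam_pos
    by (simp add: ln_prod finite_Gam less_imp_neq[symmetric])
  also have "\<dots> = (\<Sum>g\<in>Gam. \<Sum>e\<in>nontriv_on (supp g). logmu n supp Pg g e * ((1 - comm n e (pprod S M)) / 2))"
  proof (intro sum.cong refl)
    fix g assume "g \<in> Gam"
    then show "ln (loclam n supp Pg g (pprod S M))
        = (\<Sum>e\<in>nontriv_on (supp g). logmu n supp Pg g e * ((1 - comm n e (pprod S M)) / 2))"
      using ln_loclam_eq_sum_logmu[of supp g n Pg] finite_supp supp_sub set_Pg by simp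
  qed
  also have "\<dots> = (\<Sum>x\<in>EG Gam supp. logmu n supp Pg (fst x) (snd x) * ((1 - comm n (snd x) (pprod S M)) / 2))"
    unfolding EG_def using finite_Gam finite_nontriv_on[OF finite_supp]
    by (subst sum.Sigma) (auto simp: case_prod_beta)
  finally show ?thesis
    using comm_pprod_synd[OF S] by simp
qed

lemma Xest_exact:
  assumes J: "J \<in> classes" "J \<noteq> {}"
  shows "Xest m (\<lambda>S. ln (Lam S)) classes J = lognu n m M Gam supp Pg J"
  unfolding Xest_def
proof (rule Xrec_eq_of_Xbase[OF finite_classes classes_sub _ J])
  fix J' assume J': "J' \<noteq> {}" "J' \<subseteq> {..<m}"
  let ?T = "\<lambda>x. synd n m M (snd x)" and ?w = "\<lambda>x. logmu n supp Pg (fst x) (snd x)"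
  have "Xbase (\<lambda>S. ln (Lam S)) J' = (\<Sum>x\<in>{x\<in>EG Gam supp. J' \<subseteq> ?T x}. ?w x)"
    using J' finite_EG_Gam ln_Lam_eq_sum_logmu finite_subset[OF J'(2)]
    by (intro Xbase_eq_sum_covering) auto
  also have "\<dots> = (\<Sum>y\<in>{y\<in>classes. J' \<subseteq> y}. \<Sum>x\<in>{x\<in>{x\<in>EG Gam supp. J' \<subseteq> ?T x}. ?T x = y}. ?w x)"
    using finite_EG_Gam finite_classes by (intro sum.group[symmetric]) (auto simp: class_synds_def)
  also have "\<dots> = (\<Sum>y\<in>{y\<in>classes. J' \<subseteq> y}. lognu n m M Gam supp Pg y)"
    unfolding lognu_def synd_class_def by (intro sum.cong refl) (auto intro: sum.cong)
  finally show "Xbase (\<lambda>S. ln (Lam S)) J' = (\<Sum>y\<in>{y\<in>classes. J' \<subseteq> y}. lognu n m M Gam supp Pg y)" .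
qed auto

lemma Lam_ge_eig_floor:
  assumes \<eta>: "2 * \<eta> \<le> 1" and S: "S \<subseteq> {..<m}" "card S \<le> synd_card_bound"
  shows "Lam S \<ge> eig_floor"
proof -
  let ?P = "pprod S M"
  define W where "W = {j. ?P j \<noteq> (False, False)}"
  define G where "G = {g\<in>Gam. \<exists>j\<in>W. j \<in> supp g}"
  have S_fin: "finite S"
    using S(1) finite_subset by blast
  have M_S: "\<And>i. i \<in> S \<Longrightarrow> supported_on (M i) {..<n} \<and> weight (M i) \<le> rs"
    using M_bounded S(1) by auto
  note W = support_pprod[of S M n rs, OF S_fin M_S, folded W_def]
  have "card W \<le> synd_card_bound * rs"
    using W(2) S(2) by (meson le_trans mult_le_mono1)
  moreover have "card G \<le> card W * cG"
    unfolding G_def using W(1) supp_degree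
    by (intro card_supports_meeting_le) (auto intro: finite_subset)
  ultimately have card_G: "card G \<le> synd_card_bound * rs * cG"
    by (meson le_trans mult_le_mono1)
  have G: "G \<subseteq> Gam"
    unfolding G_def by auto
  have "Lam S = (\<Prod>g\<in>Gam - G. loclam n supp Pg g ?P) * (\<Prod>g\<in>G. loclam n supp Pg g ?P)"
    using Lambda_eq_prod_loclam[OF finite_Gam finite_supp set_Pg] prod.subset_diff[OF G finite_Gam]
    by simp
  also have "(\<Prod>g\<in>Gam - G. loclam n supp Pg g ?P) = 1"
    using finite_supp set_Pg unfolding G_def W_def
    by (intro prod.neutral ballI loclam_eq_1_if_disjoint) auto
  also have "(\<Prod>g\<in>G. loclam n supp Pg g ?P) \<ge> (\<Prod>g\<in>G. 2 * \<eta>)"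
  proof (intro prod_mono conjI ballI)
    fix g assume "g \<in> G"
    then have "g \<in> Gam"
      using G by auto
    then show "2 * \<eta> \<le> loclam n supp Pg g ?P"
      using loclam_ge[of supp g Pg n ?P, OF finite_supp set_Pg] Pg_Iall[of g] by linarith
  qed (use eta_pos in simp)
  moreover have "(2 * \<eta>) ^ card G \<ge> eig_floor"
    unfolding eig_floor_def using card_G \<eta> eta_pos by (intro power_decreasing) auto
  ultimately show ?thesis
    by simp
qed

lemma card_errors_violating_le:
  assumes i: "i < m"
  shows "card {x\<in>EG Gam supp. i \<in> synd n m M (snd x)} \<le> classes_per_generator"
proof -
  define W where "W = {j. M i j \<noteq> (False, False)}"
  define G where "G = {g\<in>Gam. \<exists>j\<in>W. j \<in> supp g}"
  have W: "W \<subseteq> {..<n}" "card W \<le> rs"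
    using M_bounded[OF i] unfolding W_def supported_on_def weight_def by auto
  have G: "G \<subseteq> Gam" "finite G"
    unfolding G_def using finite_Gam by auto
  have "card G \<le> card W * cG"
    unfolding G_def using W(1) supp_degree by (intro card_supports_meeting_le) (auto intro: finite_subset)
  then have card_G: "card G \<le> rs * cG"
    using W(2) by (meson le_trans mult_le_mono1)
  have "{x\<in>EG Gam supp. i \<in> synd n m M (snd x)} \<subseteq> Sigma G (\<lambda>g. nontriv_on (supp g))"
    unfolding G_def W_def by (rule violating_errors_subset)
  moreover have "finite (Sigma G (\<lambda>g. nontriv_on (supp g)))"
    using G finite_nontriv_on[OF finite_supp] by blast
  ultimately have "card {x\<in>EG Gam supp. i \<in> synd n m M (snd x)} \<le> card (Sigma G (\<lambda>g. nontriv_on (supp g)))"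
    by (intro card_mono)
  also have "\<dots> = (\<Sum>g\<in>G. card (nontriv_on (supp g)))"
    using G finite_nontriv_on[OF finite_supp] by (intro card_SigmaI) auto
  also have "\<dots> \<le> (\<Sum>g\<in>G. 4 ^ rG)"
  proof (intro sum_mono)
    fix g assume "g \<in> G"
    then have g: "g \<in> Gam"
      using G by auto
    have "card (nontriv_on (supp g)) \<le> 4 ^ card (supp g)"
      using card_nontriv_on_le[OF finite_supp[OF g]] .
    also have "\<dots> \<le> 4 ^ rG"
      using card_supp_le[OF g] by (intro power_increasing) auto
    finally show "card (nontriv_on (supp g)) \<le> 4 ^ rG" .
  qed
  also have "\<dots> \<le> classes_per_generator"
    unfolding classes_per_generator_def using card_G by simp
  finally show ?thesis .
qed

lemma card_superclasses_le:
  assumes J: "J \<in> classes" "J \<noteq> {}"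
  shows "card {y\<in>classes. J \<subseteq> y} \<le> classes_per_generator"
proof -
  obtain i where i: "i \<in> J"
    using J(2) by auto
  then have "i < m"
    using classes_sub[OF J(1)] by auto
  have "{y\<in>classes. J \<subseteq> y} \<subseteq> (\<lambda>x. synd n m M (snd x)) ` {x\<in>EG Gam supp. i \<in> synd n m M (snd x)}"
    using i unfolding class_synds_def by auto
  moreover have fin: "finite {x\<in>EG Gam supp. i \<in> synd n m M (snd x)}"
    using finite_EG_Gam by auto
  ultimately have "card {y\<in>classes. J \<subseteq> y} \<le> card ((\<lambda>x. synd n m M (snd x)) ` {x\<in>EG Gam supp. i \<in> synd n m M (snd x)})"
    by (intro card_mono) auto
  also have "\<dots> \<le> card {x\<in>EG Gam supp. i \<in> synd n m M (snd x)}"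
    using fin by (rule card_image_le)
  also have "\<dots> \<le> classes_per_generator"
    using card_errors_violating_le[OF \<open>i < m\<close>] .
  finally show ?thesis .
qed

lemma relevant_subset_bounds:
  assumes "S \<in> relevant_subsets J"
  shows "S \<subseteq> {..<m}" and "card S \<le> synd_card_bound"
proof -
  obtain y where y: "y \<in> classes" "S \<subseteq> y"
    using assms unfolding relevant_subsets_def by auto
  then show "S \<subseteq> {..<m}"
    using classes_sub by blast
  show "card S \<le> synd_card_bound"
    using card_mono[OF finite_class y(2)] card_classes_le y(1) by fastforce
qed

lemma finite_relevant_subsets: "finite (relevant_subsets J)"
  unfolding relevant_subsets_def using finite_classes finite_class by simp

lemma card_relevant_subsets_le:
  assumes J: "J \<in> classes" "J \<noteq> {}"
  shows "real (card (relevant_subsets J)) \<le> subset_count"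
proof -
  have "card (relevant_subsets J) \<le> card {y\<in>classes. J \<subseteq> y} * 2 ^ synd_card_bound"
    unfolding relevant_subsets_def
  proof (intro card_UN_le_const)
    fix y assume "y \<in> {y\<in>classes. J \<subseteq> y}"
    then have "y \<in> classes"
      by simp
    then show "card (Pow y) \<le> 2 ^ synd_card_bound"
      using finite_class card_classes_le by (simp add: card_Pow power_increasing)
  qed (use finite_classes in simp)
  also have "\<dots> \<le> classes_per_generator * 2 ^ synd_card_bound"
    using card_superclasses_le[OF J] by simp
  finally have "real (card (relevant_subsets J)) \<le> real (classes_per_generator * 2 ^ synd_card_bound)"
    by (simp only: of_nat_le_iff)
  then show ?thesis
    unfolding subset_count_def of_nat_mult of_nat_power of_nat_numeral by linarith
qed

lemma eig_floor_pos: "eig_floor > 0"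
  unfolding eig_floor_def using eta_pos by simp

lemma error_gain_ge_2: "error_gain \<ge> 2"
  unfolding error_gain_def by simp

lemma margin_pos: "margin > 0"
  unfolding margin_def using eig_floor_pos error_gain_ge_2 by simp

lemma Xest_error_le:
  assumes J: "J \<in> classes" "J \<noteq> {}" and \<epsilon>: "0 < \<epsilon>" "\<epsilon> \<le> 1"
    and close: "\<And>S. S \<in> relevant_subsets J \<Longrightarrow> \<bar>emp_mean N \<omega> S - Lam S\<bar> < \<epsilon> * margin"
  shows "\<bar>Xest m (Yemp n M N \<omega>) classes J - lognu n m M Gam supp Pg J\<bar> \<le> \<epsilon>"
proof -
  define D where "D S = Yemp n M N \<omega> S - ln (Lam S)" for S
  define b where "b = \<epsilon> / error_gain"
  have D_le: "\<bar>D S\<bar> \<le> b" if S: "S \<in> relevant_subsets J" for S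
  proof -
    have Lam: "Lam S \<ge> eig_floor"
      using Lam_ge_eig_floor[OF two_eta_le_1[OF J(1)] relevant_subset_bounds[OF S]] .
    have dev: "\<bar>emp_mean N \<omega> S - Lam S\<bar> < \<epsilon> * margin"
      using close[OF S] .
    have "\<epsilon> * margin \<le> eig_floor / 2"
      using \<epsilon> eig_floor_pos error_gain_ge_2 unfolding margin_def
      by (auto simp: field_simps intro: mult_mono)
    then have "\<bar>D S\<bar> \<le> 2 * \<bar>emp_mean N \<omega> S - Lam S\<bar> / Lam S"
      unfolding D_def Yemp_def emp_mean_def[symmetric]
      using Lam dev eig_floor_pos by (intro abs_ln_diff_le) auto
    also have "\<dots> \<le> 2 * (\<epsilon> * margin) / eig_floor"
      using Lam dev eig_floor_pos by (intro frac_le) auto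
    also have "\<dots> = b"
      unfolding b_def margin_def using eig_floor_pos error_gain_ge_2 by (simp add: field_simps)
    finally show ?thesis .
  qed
  have "Xest m (Yemp n M N \<omega>) classes J - lognu n m M Gam supp Pg J = Xrec m D classes J"
    using Xest_exact[OF J] Xrec_diff[of m "Yemp n M N \<omega>" classes J "\<lambda>S. ln (Lam S)"]
    unfolding Xest_def D_def by simp
  moreover have "\<bar>Xrec m D classes J\<bar> \<le> 2 * b * (real classes_per_generator + 1) ^ (synd_card_bound - card J)"
    using finite_class card_classes_le D_le J unfolding relevant_subsets_def
    by (intro abs_Xrec_le[OF finite_classes card_superclasses_le[OF J]]) auto
  moreover have "\<dots> \<le> 2 * b * (real classes_per_generator + 1) ^ synd_card_bound"
    using \<epsilon> error_gain_ge_2 unfolding b_def by (intro mult_left_mono power_increasing) auto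
  moreover have "2 * b * (real classes_per_generator + 1) ^ synd_card_bound = \<epsilon>"
    unfolding b_def error_gain_def by simp
  ultimately show ?thesis
    by simp
qed

lemma prob_Xest_error_le:
  assumes J: "J \<in> classes" "J \<noteq> {}" and \<epsilon>: "0 < \<epsilon>" "\<epsilon> < 1" and \<delta>: "0 < \<delta>" "\<delta> < 1/2"
    and N: "real N \<ge> sample_const / \<epsilon>\<^sup>2 * ln (1 / \<delta>)"
  shows "measure_pmf.prob (Pi_pmf {..<N} Iall (\<lambda>_. Ptot Gam Pg))
           {\<omega>. \<bar>Xest m (Yemp n M N \<omega>) classes J - lognu n m M Gam supp Pg J\<bar> \<le> \<epsilon>} \<ge> 1 - \<delta>"
proof -
  let ?t = "\<epsilon> * margin"
  have subset_count: "subset_count \<ge> 1"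
    unfolding subset_count_def by simp
  have "sample_const > 0"
    unfolding sample_const_def using margin_pos subset_count by (simp add: add_pos_nonneg)
  moreover have "ln (1 / \<delta>) > 0"
    using \<delta> by simp
  ultimately have "sample_const / \<epsilon>\<^sup>2 * ln (1 / \<delta>) > 0"
    using \<epsilon> by simp
  then have "N > 0"
    using N by simp
  show ?thesis
  proof (rule prob_ge_of_union_bound[OF finite_relevant_subsets, where B = "\<lambda>S. {\<omega>. ?t \<le> \<bar>emp_mean N \<omega> S - Lam S\<bar>}"])
    fix \<omega>
    assume "\<And>S. S \<in> relevant_subsets J \<Longrightarrow> \<omega> \<notin> {\<omega>. ?t \<le> \<bar>emp_mean N \<omega> S - Lam S\<bar>}"
    then show "\<omega> \<in> {\<omega>. \<bar>Xest m (Yemp n M N \<omega>) classes J - lognu n m M Gam supp Pg J\<bar> \<le> \<epsilon>}"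
      using Xest_error_le[OF J \<epsilon>(1)] \<epsilon>(2) by force
  next
    fix S
    show "measure_pmf.prob (Pi_pmf {..<N} Iall (\<lambda>_. Ptot Gam Pg)) {\<omega>. ?t \<le> \<bar>emp_mean N \<omega> S - Lam S\<bar>}
        \<le> 2 * exp (- real N * ?t\<^sup>2 / 2)"
      unfolding emp_mean_def Lambda_def
      using \<open>N > 0\<close> \<epsilon> margin_pos abs_comm by (intro prob_Pi_pmf_mean_deviation_le) auto
  next
    have "subset_count * (2 * exp (- real N * ?t\<^sup>2 / 2)) \<le> \<delta>"
      using N unfolding sample_const_def
      by (intro union_tail_le_of_sample_size[OF margin_pos subset_count \<epsilon>(1) \<delta>]) simp
    moreover have "real (card (relevant_subsets J)) * (2 * exp (- real N * ?t\<^sup>2 / 2))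
        \<le> subset_count * (2 * exp (- real N * ?t\<^sup>2 / 2))"
      using card_relevant_subsets_le[OF J] by (intro mult_right_mono) auto
    ultimately show "real (card (relevant_subsets J)) * (2 * exp (- real N * ?t\<^sup>2 / 2)) \<le> \<delta>"
      by linarith
  qed
qed

end

theorem lemma17:
  fixes rG cG rs cs :: nat and \<eta> :: real
  assumes "\<eta> > 0"
  shows "\<exists>K::real. \<forall>(n::nat) (m::nat) (Gam::nat set) (supp::nat \<Rightarrow> nat set) (Pg::nat \<Rightarrow> pauli pmf)
      (M::nat \<Rightarrow> pauli) (J::nat set) (\<epsilon>::real) (\<delta>::real) (N::nat).
    finite Gam
    \<and> (\<forall>g\<in>Gam. supp g \<subseteq> {..<n} \<and> card (supp g) \<le> rG)
    \<and> (\<forall>j<n. card {g\<in>Gam. j \<in> supp g} \<le> cG)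
    \<and> (\<forall>g\<in>Gam. set_pmf (Pg g) \<subseteq> paulis_on (supp g))
    \<and> (\<forall>g\<in>Gam. pmf (Pg g) Iall > 1/2 \<and> (\<forall>e\<in>nontriv_on (supp g). pmf (Pg g) e > 0))
    \<and> (\<forall>g\<in>Gam. pmf (Pg g) Iall \<ge> 1/2 + \<eta>)
    \<and> (\<forall>i<m. supported_on (M i) {..<n} \<and> weight (M i) \<le> rs)
    \<and> (\<forall>j<n. card {i\<in>{..<m}. M i j \<noteq> (False, False)} \<le> cs)
    \<and> (\<forall>i<m. \<forall>i'<m. symp n (M i) (M i') = 0)
    \<and> J \<in> class_synds n m M Gam supp \<and> J \<noteq> {}
    \<and> 0 < \<epsilon> \<and> \<epsilon> < 1 \<and> 0 < \<delta> \<and> \<delta> < 1/2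
    \<and> real N \<ge> K / \<epsilon>\<^sup>2 * ln (1 / \<delta>)
    \<longrightarrow> measure_pmf.prob (Pi_pmf {..<N} Iall (\<lambda>_. Ptot Gam Pg))
          {\<omega>. \<bar>Xest m (Yemp n M N \<omega>) (class_synds n m M Gam supp) J
                 - lognu n m M Gam supp Pg J\<bar> \<le> \<epsilon>} \<ge> 1 - \<delta>"
proof (intro exI[of _ "local_sparse_code.sample_const rG cG rs cs \<eta>"] allI impI, goal_cases)
  case (1 n m Gam supp Pg M J \<epsilon> \<delta> N)
  interpret local_sparse_code rG cG rs cs \<eta> n m Gam supp Pg M
    using 1 \<open>\<eta> > 0\<close> by unfold_locales auto
  show ?case
    using 1 by (intro prob_Xest_error_le) auto
qed

end
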